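(* Let $T=(V,E)$ be a finite rooted binary tree with root $\rho$, $\Pr$ a probability distribution over a finite set of queries, and $k$ a positive integer. Consider the dynamic-programming algorithm described in the context, which fills the table $D(u,\kappa,v)$ bottom-up and then calls $\mathrm{ConstructSolution}(\rho,k,\epsilon)$. Then the set of nodes printed by this call is an optimal solution $R^*$, i.e., it maximizes the benefit $B(R)$ over all sets $R$ of non-leaf nodes of $T$ with $|R|\le k$, and $D(\rho,k,\epsilon)$ equals this optimal benefit.
   Context: Setting. $T=(V,E)$ is a finite rooted tree in which every non-leaf node $u$ has exactly two children, a left child $\ell(u)$ and a right child $r(u)$. $T(u)$ is the set of nodes of the subtree rooted at $u$ (including $u$), $A(u)$ the set of proper ancestors of $u$, and for $v\in A(u)$, $\mathrm{path}(u,v)$ the nodes strictly between $u$ and $v$. Each non-leaf node is associated with a variable of a finite set $X$; $\mathrm{vars}(u)$ is the set of variables associated with nodes of $T(u)$. Each query $q$ determines $Z_q\subseteq X$. For $R\subseteq V$, $w\in V$: $I_q(w,R)=1$ iff $w\in R$, $\mathrm{vars}(w)\subseteq Z_q$, and no $x\in A(w)\cap R$ has $\mathrm{vars}(x)\subseteq Z_q$; else $0$; $\mathbb{E}[I(w,R)]=\sum_q\Pr(q)I_q(w,R)$. Nodes have partial costs $c(x)\ge 0$; total cost $C(w)=\sum_{x\in T(w)}c(x)$. Benefit $B(R)=\sum_{w\in R}\mathbb{E}[I(w,R)]C(w)$; partial benefit $B_u(R)=\sum_{w\in R\cap T(u)}\mathbb{E}[I(w,R)]C(w)$. $\epsilon$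 is an auxiliary symbol not in $V$, $A^\epsilon(u)=A(u)\cup\{\epsilon\}$, $\mathrm{path}(u,\epsilon)=A(u)$; $\epsilon$ is regarded as belonging to every set but not counted in its size and contributing nothing, so $B_u(S\cup\{\epsilon\})=B_u(S)$. In particular $B_u(\{u,v\})=\mathbb{E}[I(u,\{u,v\})]C(u)$ and $B_u(\{u,\epsilon\})=\mathbb{E}[I(u,\{u\})]C(u)$. Algorithm. For $u\in V$, $v\in A^\epsilon(u)$ and integers $0\le\kappa\le\min\{k,|T(u)|\}$, $D(u,\kappa,v)$ is intended to be the maximum of $B_u(R)$ over sets $R$ with $|T(u)\cap R|\le\kappa$, $v\in R$, $\mathrm{path}(u,v)\cap R=\emptyset$. It is computed bottom-up as $D(u,\kappa,v)=\max\{D^{+}(u,\kappa,v),D^{-}(u,\kappa,v)\}$ where: if $u$ is a leaf, $D^{-}(u,\kappa,v)=0$ and $D^{+}(u,\kappa,v)=-\infty$ (leaves are never selected); if $u$ is not a leaf, $D^{+}(u,\kappa,v)=B_u(\{u,v\})+\max_{\kappa_\ell+\kappa_r=\kappa-1}\{D(\ell(u),\kappa_\ell,u)+D(r(u),\kappa_r,u)\}$ (and $-\infty$ if $\kappa=0$), $D^{-}(u,\kappa,v)=\max_{\kappa_\ell+\kappa_r=\kappa}\{D(\ell(u),\kappa_\ell,v)+D(r(u),\kappa_r,v)\}$, the maxima ranging over nonnegative $\kappa_\ell,\kappa_r$ for which the entries are defined. $\mathrm{ConstructSolution}(u,\kappa,v)$: if $D(u,\kappa,v)=D^{+}(u,\kappa,v)$,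 print $u$; if $\kappa=1$ return; otherwise take $(\kappa_\ell^*,\kappa_r^* )$ maximizing $D(\ell(u),\kappa_\ell,u)+D(r(u),\kappa_r,u)$ subject to $\kappa_\ell+\kappa_r=\kappa-1$ and call $\mathrm{ConstructSolution}(\ell(u),\kappa_\ell^*,u)$ and $\mathrm{ConstructSolution}(r(u),\kappa_r^*,u)$. Else take $(\kappa_\ell^*,\kappa_r^* )$ maximizing $D(\ell(u),\kappa_\ell,v)+D(r(u),\kappa_r,v)$ subject to $\kappa_\ell+\kappa_r=\kappa$ and call $\mathrm{ConstructSolution}(\ell(u),\kappa_\ell^*,v)$ and $\mathrm{ConstructSolution}(r(u),\kappa_r^*,v)$. *)

theory Defs
  imports Main "HOL-Library.Extended_Real" "HOL-Library.Sublist"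
begin

text \<open>Full binary trees; every inner node carries a variable.  Nodes of a tree are
  identified by their positions (paths from the root; False = left, True = right).\<close>

datatype 'x btree = Leaf | Node 'x "'x btree" "'x btree"

type_synonym pos = "bool list"

fun positions :: "'x btree \<Rightarrow> pos set" where
  "positions Leaf = {[]}"
| "positions (Node x l r) = insert [] (Cons False ` positions l \<union> Cons True ` positions r)"

fun subtree :: "'x btree \<Rightarrow> pos \<Rightarrow> 'x btree" where
  "subtree t [] = t"
| "subtree (Node x l r) (False # p) = subtree l p"
| "subtree (Node x l r) (True # p) = subtree r p"
| "subtree Leaf (b # p) = Leaf"

fun tvars :: "'x btree \<Rightarrow> 'x set" where
  "tvars Leaf = {}"
| "tvars (Node x l r) = insert x (tvars l \<union> tvars r)"

fun nnodes :: "'x btree \<Rightarrow> nat" where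
  "nnodes Leaf = 1"
| "nnodes (Node x l r) = 1 + nnodes l + nnodes r"

definition inner :: "'x btree \<Rightarrow> pos set" where
  "inner t = {u \<in> positions t. subtree t u \<noteq> Leaf}"

definition Tset :: "'x btree \<Rightarrow> pos \<Rightarrow> pos set" where
  "Tset t u = {w \<in> positions t. prefix u w}"

definition anc :: "pos \<Rightarrow> pos set" where
  "anc u = {a. strict_prefix a u}"

definition vars :: "'x btree \<Rightarrow> pos \<Rightarrow> 'x set" where
  "vars t u = tvars (subtree t u)"

definition Ind :: "'x btree \<Rightarrow> ('q \<Rightarrow> 'x set) \<Rightarrow> 'q \<Rightarrow> pos \<Rightarrow> pos set \<Rightarrow> bool" where
  "Ind t Z q w R \<longleftrightarrow> w \<in> R \<and> vars t w \<subseteq> Z q \<and> \<not> (\<exists>x \<in> anc w \<inter> R. vars t x \<subseteq> Z q)"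

definition EI :: "'q set \<Rightarrow> ('q \<Rightarrow> real) \<Rightarrow> 'x btree \<Rightarrow> ('q \<Rightarrow> 'x set) \<Rightarrow> pos \<Rightarrow> pos set \<Rightarrow> real" where
  "EI Q pr t Z w R = (\<Sum>q\<in>Q. pr q * (if Ind t Z q w R then 1 else 0))"

definition Ctot :: "'x btree \<Rightarrow> (pos \<Rightarrow> real) \<Rightarrow> pos \<Rightarrow> real" where
  "Ctot t c w = (\<Sum>x\<in>Tset t w. c x)"

definition Ben :: "'q set \<Rightarrow> ('q \<Rightarrow> real) \<Rightarrow> 'x btree \<Rightarrow> ('q \<Rightarrow> 'x set) \<Rightarrow> (pos \<Rightarrow> real) \<Rightarrow> pos set \<Rightarrow> real" where
  "Ben Q pr t Z c R = (\<Sum>w\<in>R. EI Q pr t Z w R * Ctot t c w)"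

text \<open>B_u({u,v}) where v = None stands for \<epsilon>\<close>
definition Bu :: "'q set \<Rightarrow> ('q \<Rightarrow> real) \<Rightarrow> 'x btree \<Rightarrow> ('q \<Rightarrow> 'x set) \<Rightarrow> (pos \<Rightarrow> real) \<Rightarrow> pos \<Rightarrow> pos option \<Rightarrow> real" where
  "Bu Q pr t Z c u v = (case v of None \<Rightarrow> EI Q pr t Z u {u} | Some a \<Rightarrow> EI Q pr t Z u {u, a}) * Ctot t c u"

definition splits :: "nat \<Rightarrow> nat \<Rightarrow> nat \<Rightarrow> (nat \<times> nat) set" where
  "splits n kl kr = {(a, b). a + b = n \<and> a \<le> kl \<and> b \<le> kr}"

definition splitmax :: "nat \<Rightarrow> nat \<Rightarrow> nat \<Rightarrow> (nat \<Rightarrow> ereal) \<Rightarrow> (nat \<Rightarrow> ereal) \<Rightarrow> ereal" where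
  "splitmax n kl kr f g = (SUP p \<in> splits n kl kr. f (fst p) + g (snd p))"

text \<open>The table D(u,\<kappa>,v).  The first tree argument is the full tree T, the second one
  the subtree rooted at the position u (the recursion runs over it).\<close>
fun Dtab :: "'q set \<Rightarrow> ('q \<Rightarrow> real) \<Rightarrow> ('q \<Rightarrow> 'x set) \<Rightarrow> (pos \<Rightarrow> real) \<Rightarrow> nat \<Rightarrow> 'x btree
    \<Rightarrow> 'x btree \<Rightarrow> pos \<Rightarrow> nat \<Rightarrow> pos option \<Rightarrow> ereal" where
  "Dtab Q pr Z c k t Leaf u \<kappa> v = max (-\<infinity>) 0"
| "Dtab Q pr Z c k t (Node x l r) u \<kappa> v =
     max (if \<kappa> = 0 then -\<infinity> else
            ereal (Bu Q pr t Z c u v) +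
            splitmax (\<kappa> - 1) (min k (nnodes l)) (min k (nnodes r))
              (\<lambda>a. Dtab Q pr Z c k t l (u @ [False]) a (Some u))
              (\<lambda>b. Dtab Q pr Z c k t r (u @ [True]) b (Some u)))
         (splitmax \<kappa> (min k (nnodes l)) (min k (nnodes r))
              (\<lambda>a. Dtab Q pr Z c k t l (u @ [False]) a v)
              (\<lambda>b. Dtab Q pr Z c k t r (u @ [True]) b v))"

fun Dplus :: "'q set \<Rightarrow> ('q \<Rightarrow> real) \<Rightarrow> ('q \<Rightarrow> 'x set) \<Rightarrow> (pos \<Rightarrow> real) \<Rightarrow> nat \<Rightarrow> 'x btree
    \<Rightarrow> 'x btree \<Rightarrow> pos \<Rightarrow> nat \<Rightarrow> pos option \<Rightarrow> ereal" where
  "Dplus Q pr Z c k t Leaf u \<kappa> v = -\<infinity>"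
| "Dplus Q pr Z c k t (Node x l r) u \<kappa> v =
     (if \<kappa> = 0 then -\<infinity> else
            ereal (Bu Q pr t Z c u v) +
            splitmax (\<kappa> - 1) (min k (nnodes l)) (min k (nnodes r))
              (\<lambda>a. Dtab Q pr Z c k t l (u @ [False]) a (Some u))
              (\<lambda>b. Dtab Q pr Z c k t r (u @ [True]) b (Some u)))"

text \<open>ConstructSolution(u,\<kappa>,v) as a relation between its arguments and the set of
  printed nodes; it allows every admissible choice of maximizing split (any tie-breaking).\<close>
inductive construct :: "'q set \<Rightarrow> ('q \<Rightarrow> real) \<Rightarrow> ('q \<Rightarrow> 'x set) \<Rightarrow> (pos \<Rightarrow> real) \<Rightarrow> nat \<Rightarrow> 'x btree
    \<Rightarrow> 'x btree \<Rightarrow> pos \<Rightarrow> nat \<Rightarrow> pos option \<Rightarrow> pos set \<Rightarrow> bool"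
  for Q pr Z c k t where
  leaf: "construct Q pr Z c k t Leaf u \<kappa> v {}"
| plus_one: "Dtab Q pr Z c k t (Node x l r) u 1 v = Dplus Q pr Z c k t (Node x l r) u 1 v
     \<Longrightarrow> construct Q pr Z c k t (Node x l r) u 1 v {u}"
| plus: "\<lbrakk> Dtab Q pr Z c k t (Node x l r) u \<kappa> v = Dplus Q pr Z c k t (Node x l r) u \<kappa> v;
      \<kappa> > 1;
      (a, b) \<in> splits (\<kappa> - 1) (min k (nnodes l)) (min k (nnodes r));
      \<forall>(a', b') \<in> splits (\<kappa> - 1) (min k (nnodes l)) (min k (nnodes r)).
          Dtab Q pr Z c k t l (u @ [False]) a' (Some u) + Dtab Q pr Z c k t r (u @ [True]) b' (Some u)
          \<le> Dtab Q pr Z c k t l (u @ [False]) a (Some u) + Dtab Q pr Z c k t r (u @ [True]) b (Some u);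
      construct Q pr Z c k t l (u @ [False]) a (Some u) S1;
      construct Q pr Z c k t r (u @ [True]) b (Some u) S2 \<rbrakk>
     \<Longrightarrow> construct Q pr Z c k t (Node x l r) u \<kappa> v (insert u (S1 \<union> S2))"
| minus: "\<lbrakk> Dtab Q pr Z c k t (Node x l r) u \<kappa> v \<noteq> Dplus Q pr Z c k t (Node x l r) u \<kappa> v;
      (a, b) \<in> splits \<kappa> (min k (nnodes l)) (min k (nnodes r));
      \<forall>(a', b') \<in> splits \<kappa> (min k (nnodes l)) (min k (nnodes r)).
          Dtab Q pr Z c k t l (u @ [False]) a' v + Dtab Q pr Z c k t r (u @ [True]) b' v
          \<le> Dtab Q pr Z c k t l (u @ [False]) a v + Dtab Q pr Z c k t r (u @ [True]) b v;
      construct Q pr Z c k t l (u @ [False]) a v S1;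
      construct Q pr Z c k t r (u @ [True]) b v S2 \<rbrakk>
     \<Longrightarrow> construct Q pr Z c k t (Node x l r) u \<kappa> v (S1 \<union> S2)"

end

theory Submission
  imports Defs
begin

text \<open>Read \<open>D(u,\<kappa>,v)\<close> as the best partial benefit \<open>B\<^sub>u(R \<union> {v})\<close> over sets \<open>R\<close> of at most
  \<open>\<kappa>\<close> inner nodes of \<open>T(u)\<close>.  Whether a node \<open>w \<in> R\<close> answers a query depends only on its
  ancestors in \<open>R \<union> {v}\<close>, and its nearest relevant ancestor outside \<open>T(u)\<close> is \<open>u\<close> when
  \<open>u \<in> R\<close> and \<open>v\<close> otherwise: a context node that qualifies makes every descendant qualify.
  So the partial benefit splits along the two children, with context \<open>u\<close> or \<open>v\<close>, exactly as
  in the recursion.  Induction over \<open>ConstructSolution\<close> shows that the printed set attains the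
  table value; induction over the tree shows that no admissible set exceeds it.  The only
  subtlety is that the table caps the budgets of the children; when the caps leave no room
  for a set avoiding \<open>u\<close>, adding \<open>u\<close> is free and loses no benefit, since the nodes answering
  a query below \<open>u\<close> form an antichain whose costs are covered by \<open>C(u)\<close>.\<close>

section \<open>Positions and subtrees\<close>

lemma subtree_Leaf [simp]: "subtree Leaf p = Leaf"
  by (cases p) simp_all

lemma subtree_append: "subtree t (u @ p) = subtree (subtree t u) p"
proof (induction u arbitrary: t)
  case (Cons b u) then show ?case by (cases t; cases b) auto
qed simp

lemma subtree_append_children:
  "subtree t u = Node x l r \<Longrightarrow> subtree t (u @ [False]) = l \<and> subtree t (u @ [True]) = r"
  by (simp add: subtree_append)

lemma positions_if_subtree_ne_Leaf: "subtree t u \<noteq> Leaf \<Longrightarrow> u \<in> positions t"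
proof (induction u arbitrary: t)
  case Nil then show ?case by (cases t) auto
next
  case (Cons b u) then show ?case by (cases t; cases b) auto
qed

lemma root_in_inner_Tset: "subtree t u = Node x l r \<Longrightarrow> u \<in> inner t \<inter> Tset t u"
  using positions_if_subtree_ne_Leaf[of t u] by (auto simp: inner_def Tset_def)

lemma finite_positions: "finite (positions t)"
  by (induction t) auto

lemma finite_Tset: "finite (Tset t u)"
  unfolding Tset_def by (rule finite_subset[OF _ finite_positions]) auto

lemma finite_subset_Tset: "R \<subseteq> Tset t u \<Longrightarrow> finite R"
  using finite_Tset finite_subset by blast

lemma Tset_subset_children: "Tset t u \<subseteq> insert u (Tset t (u @ [False]) \<union> Tset t (u @ [True]))"
proof
  fix w assume "w \<in> Tset t u"
  then obtain p where w: "w \<in> positions t" "w = u @ p" by (auto simp: Tset_def prefix_def)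
  then show "w \<in> insert u (Tset t (u @ [False]) \<union> Tset t (u @ [True]))"
    by (cases p) (auto simp: Tset_def)
qed

lemma Tset_child_subset: "Tset t (u @ [b]) \<subseteq> Tset t u"
  by (auto simp: Tset_def prefix_def)

lemma notin_Tset_child: "u \<notin> Tset t (u @ [b])"
  by (auto simp: Tset_def prefix_def)

lemma Tset_children_disjoint: "Tset t (u @ [False]) \<inter> Tset t (u @ [True]) = {}"
  by (auto simp: Tset_def prefix_def)

lemma anc_disjoint_Tset_sibling: "w \<in> Tset t (u @ [b]) \<Longrightarrow> anc w \<inter> Tset t (u @ [\<not> b]) = {}"
  by (auto simp: Tset_def anc_def prefix_def strict_prefix_def)

lemma anc_disjoint_Tset_child: "anc u \<inter> Tset t (u @ [b]) = {}"
  by (auto simp: Tset_def anc_def prefix_def strict_prefix_def)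

lemma anc_if_Tset_child: "w \<in> Tset t (u @ [b]) \<Longrightarrow> u \<in> anc w"
  by (auto simp: Tset_def anc_def prefix_def strict_prefix_def)

lemma tvars_subtree_subset: "tvars (subtree s p) \<subseteq> tvars s"
  by (induction s p rule: subtree.induct) auto

lemma vars_antimono: "prefix a w \<Longrightarrow> vars t w \<subseteq> vars t a"
  by (auto simp: vars_def prefix_def subtree_append dest: subsetD[OF tvars_subtree_subset])

lemma card_inner_Tset_less: "subtree t u = s \<Longrightarrow> card (inner t \<inter> Tset t u) < nnodes s"
proof (induction s arbitrary: u)
  case Leaf
  then have "inner t \<inter> Tset t u = {}"
    by (auto simp: inner_def Tset_def prefix_def subtree_append)
  then show ?case by simp
next
  case (Node x l r)
  let ?I = "\<lambda>b. inner t \<inter> Tset t (u @ [b])"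
  have "card (inner t \<inter> Tset t u) \<le> card (insert u (?I False \<union> ?I True))"
    using Tset_subset_children by (intro card_mono) (auto simp: finite_Tset)
  also have "\<dots> \<le> Suc (card (?I False \<union> ?I True))"
    by (rule card_insert_le_m1) auto
  also have "\<dots> \<le> Suc (card (?I False) + card (?I True))"
    using card_Un_le by simp
  finally show ?case
    using Node.IH subtree_append_children[OF Node.prems] by fastforce
qed

lemma card_children_le:
  assumes "subtree t u = Node x l r" and "R \<subseteq> inner t \<inter> Tset t u" and "card R \<le> k"
  shows "card (R \<inter> Tset t (u @ [False])) \<le> min k (nnodes l)"
    and "card (R \<inter> Tset t (u @ [True])) \<le> min k (nnodes r)"
proof -
  have "card (R \<inter> Tset t (u @ [b])) \<le> card R" for b
    using finite_subset_Tset[of R t u] assms(2) by (intro card_mono) auto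
  moreover have "card (R \<inter> Tset t (u @ [b])) \<le> card (inner t \<inter> Tset t (u @ [b]))" for b
    using assms(2) by (intro card_mono) (auto simp: finite_Tset)
  ultimately show "card (R \<inter> Tset t (u @ [False])) \<le> min k (nnodes l)"
    and "card (R \<inter> Tset t (u @ [True])) \<le> min k (nnodes r)"
    using assms(3) card_inner_Tset_less subtree_append_children[OF assms(1)]
    by (metis min.bounded_iff order.trans less_imp_le)+
qed

lemma card_union_children:
  "S1 \<subseteq> Tset t (u @ [False]) \<Longrightarrow> S2 \<subseteq> Tset t (u @ [True]) \<Longrightarrow> card (S1 \<union> S2) = card S1 + card S2"
  using Tset_children_disjoint[of t u] by (intro card_Un_disjoint) (auto intro: finite_subset_Tset)

lemma card_insert_children:
  "S1 \<subseteq> Tset t (u @ [False]) \<Longrightarrow> S2 \<subseteq> Tset t (u @ [True])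
   \<Longrightarrow> card (insert u (S1 \<union> S2)) = Suc (card S1 + card S2)"
  using card_union_children[of S1 t u S2] notin_Tset_child[of u t]
  by (subst card_insert_disjoint) (auto intro: finite_subset_Tset)

section \<open>Maxima over splits\<close>

lemma finite_splits: "finite (splits n kl kr)"
  by (rule finite_subset[of _ "{..kl} \<times> {..kr}"]) (auto simp: splits_def)

lemma splits_0: "splits 0 kl kr = {(0, 0)}"
  by (auto simp: splits_def)

lemma splits_eq_empty_iff: "splits n kl kr = {} \<longleftrightarrow> kl + kr < n"
proof
  assume "splits n kl kr = {}"
  moreover have "n \<le> kl + kr \<Longrightarrow> (min kl n, n - min kl n) \<in> splits n kl kr"
    by (auto simp: splits_def)
  ultimately show "kl + kr < n" by fastforce
qed (auto simp: splits_def)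

lemma splitmax_upper: "(a, b) \<in> splits n kl kr \<Longrightarrow> f a + g b \<le> splitmax n kl kr f g"
  unfolding splitmax_def by (rule SUP_upper2) auto

lemma splitmax_empty: "kl + kr < n \<Longrightarrow> splitmax n kl kr f g = -\<infinity>"
  unfolding splits_eq_empty_iff[symmetric] by (simp add: splitmax_def bot_ereal_def)

lemma splitmax_eq_if_maximal:
  assumes "(a, b) \<in> splits n kl kr"
    and "\<forall>(a', b') \<in> splits n kl kr. f a' + g b' \<le> f a + g b"
  shows "splitmax n kl kr f g = f a + g b"
  unfolding splitmax_def
  by (rule antisym) (use assms in \<open>auto intro!: SUP_least SUP_upper2[of "(a, b)"]\<close>)

lemma ex_maximal_split:
  fixes f g :: "nat \<Rightarrow> ereal"
  assumes "n \<le> kl + kr"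
  obtains a b where "(a, b) \<in> splits n kl kr"
    and "\<forall>(a', b') \<in> splits n kl kr. f a' + g b' \<le> f a + g b"
proof -
  let ?h = "\<lambda>p. f (fst p) + g (snd p)"
  have fin: "finite (?h ` splits n kl kr)" using finite_splits by simp
  have "splits n kl kr \<noteq> {}" using assms splits_eq_empty_iff by simp
  then obtain p where p: "p \<in> splits n kl kr" "?h p = Max (?h ` splits n kl kr)"
    using Max_in[OF fin] by (metis (no_types, lifting) empty_is_image imageE)
  then show thesis using Max_ge[OF fin] by (intro that[of "fst p" "snd p"]) fastforce+
qed

lemma splitmax_lower:
  fixes x y :: ereal
  assumes "cl \<le> kl" "cr \<le> kr" "cl + cr \<le> n" "n \<le> kl + kr"
    and "\<And>a. cl \<le> a \<Longrightarrow> a \<le> kl \<Longrightarrow> x \<le> f a"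
    and "\<And>b. cr \<le> b \<Longrightarrow> b \<le> kr \<Longrightarrow> y \<le> g b"
  shows "x + y \<le> splitmax n kl kr f g"
proof -
  define a where "a = max cl (n - kr)"
  have split: "(a, n - a) \<in> splits n kl kr" and "cl \<le> a" "cr \<le> n - a"
    using assms(1-4) by (auto simp: a_def splits_def)
  then have "x + y \<le> f a + g (n - a)"
    using assms(5,6) split by (intro add_mono) (auto simp: splits_def)
  also have "\<dots> \<le> splitmax n kl kr f g" using splitmax_upper[OF split] .
  finally show ?thesis .
qed

lemma Dtab_0: "Dtab Q pr Z c k t s u 0 v = 0"
  by (induction s arbitrary: u v) (simp_all add: splitmax_def splits_0)

lemma Dtab_Node_eq_max:
  "Dtab Q pr Z c k t (Node x l r) u \<kappa> v = max (Dplus Q pr Z c k t (Node x l r) u \<kappa> v)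
     (splitmax \<kappa> (min k (nnodes l)) (min k (nnodes r))
        (\<lambda>a. Dtab Q pr Z c k t l (u @ [False]) a v) (\<lambda>b. Dtab Q pr Z c k t r (u @ [True]) b v))"
  by simp

lemma Dplus_1: "Dplus Q pr Z c k t (Node x l r) u 1 v = ereal (Bu Q pr t Z c u v)"
  by (simp add: splitmax_def splits_0 Dtab_0)

lemma construct_exists:
  "\<kappa> \<le> min k (nnodes s) \<Longrightarrow> \<exists>S. construct Q pr Z c k t s u \<kappa> v S"
proof (induction s arbitrary: u \<kappa> v)
  case Leaf
  then show ?case by (auto intro: construct.leaf)
next
  case (Node x l r)
  let ?kl = "min k (nnodes l)" and ?kr = "min k (nnodes r)"
  let ?Dl = "Dtab Q pr Z c k t l (u @ [False])" and ?Dr = "Dtab Q pr Z c k t r (u @ [True])"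
  show ?case
  proof (cases "Dtab Q pr Z c k t (Node x l r) u \<kappa> v = Dplus Q pr Z c k t (Node x l r) u \<kappa> v")
    case plus: True
    then have "\<kappa> \<noteq> 0"
      using Dtab_0[of Q pr Z c k t "Node x l r" u v] by (cases "\<kappa> = 0") (simp_all del: Dtab.simps)
    show ?thesis
    proof (cases "\<kappa> = 1")
      case True
      then show ?thesis using construct.plus_one[OF plus[unfolded True]] by blast
    next
      case False
      have "\<kappa> - 1 \<le> ?kl + ?kr" using Node.prems by (auto simp: min_def split: if_splits)
      then obtain a b where ab: "(a, b) \<in> splits (\<kappa> - 1) ?kl ?kr"
        and max: "\<forall>(a', b') \<in> splits (\<kappa> - 1) ?kl ?kr.
          ?Dl a' (Some u) + ?Dr b' (Some u) \<le> ?Dl a (Some u) + ?Dr b (Some u)"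
        by (rule ex_maximal_split)
      obtain S1 where "construct Q pr Z c k t l (u @ [False]) a (Some u) S1"
        using Node.IH(1)[of a] ab by (auto simp: splits_def)
      moreover obtain S2 where "construct Q pr Z c k t r (u @ [True]) b (Some u) S2"
        using Node.IH(2)[of b] ab by (auto simp: splits_def)
      ultimately
      show ?thesis using construct.plus[OF plus _ ab max] False \<open>\<kappa> \<noteq> 0\<close> by auto
    qed
  next
    case minus: False
    have "\<kappa> \<le> ?kl + ?kr"
      using minus splitmax_empty[of ?kl ?kr \<kappa>] by (fastforce simp: Dtab_Node_eq_max)
    then obtain a b where ab: "(a, b) \<in> splits \<kappa> ?kl ?kr"
      and max: "\<forall>(a', b') \<in> splits \<kappa> ?kl ?kr. ?Dl a' v + ?Dr b' v \<le> ?Dl a v + ?Dr b v"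
      by (rule ex_maximal_split)
    obtain S1 where "construct Q pr Z c k t l (u @ [False]) a v S1"
      using Node.IH(1)[of a] ab by (auto simp: splits_def)
    moreover obtain S2 where "construct Q pr Z c k t r (u @ [True]) b v S2"
      using Node.IH(2)[of b] ab by (auto simp: splits_def)
    ultimately show ?thesis using construct.minus[OF minus ab max] by auto
  qed
qed

section \<open>Indicators and partial benefits\<close>

lemma EI_cong:
  "(\<And>q. q \<in> Q \<Longrightarrow> Ind t Z q w S \<longleftrightarrow> Ind t Z q w S') \<Longrightarrow> EI Q pr t Z w S = EI Q pr t Z w S'"
  unfolding EI_def by (rule sum.cong) auto

lemma EI_Un_non_ancestors:
  "anc w \<inter> X = {} \<Longrightarrow> w \<notin> X \<Longrightarrow> EI Q pr t Z w (R \<union> X) = EI Q pr t Z w R"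
  by (rule EI_cong) (auto simp: Ind_def)

lemma EI_Un_sibling:
  assumes w: "w \<in> Tset t (u @ [b])" and S: "S \<subseteq> Tset t (u @ [\<not> b])"
  shows "EI Q pr t Z w (R \<union> S) = EI Q pr t Z w R"
proof (rule EI_Un_non_ancestors)
  show "anc w \<inter> S = {}" using anc_disjoint_Tset_sibling[OF w] S by blast
  have "Tset t (u @ [b]) \<inter> Tset t (u @ [\<not> b]) = {}" by (auto simp: Tset_def prefix_def)
  then show "w \<notin> S" using w S by blast
qed

definition anc_or_eps :: "pos option \<Rightarrow> pos \<Rightarrow> bool" where
  "anc_or_eps v u \<longleftrightarrow> (\<forall>a. v = Some a \<longrightarrow> strict_prefix a u)"

lemma anc_or_eps_None: "anc_or_eps None u"
  by (simp add: anc_or_eps_def)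

lemma anc_or_eps_parent: "anc_or_eps (Some u) (u @ [b])"
  by (auto simp: anc_or_eps_def strict_prefix_def prefix_def)

lemma anc_or_eps_child: "anc_or_eps v u \<Longrightarrow> anc_or_eps v (u @ [b])"
  by (auto simp: anc_or_eps_def intro: prefix_order.less_le_trans)

text \<open>If the context node \<open>a\<close> qualifies for a query, so does its descendant \<open>u\<close>, which lies
  between \<open>a\<close> and \<open>w\<close>; hence \<open>a\<close> does not affect the indicator of \<open>w\<close>.\<close>

lemma EI_context_shadowed:
  assumes "anc_or_eps v u" and "u \<in> anc w"
  shows "EI Q pr t Z w (insert u R \<union> set_option v) = EI Q pr t Z w (insert u R)"
proof (cases v)
  case (Some a)
  show ?thesis
  proof (rule EI_cong)
    fix q
    have "strict_prefix a u" using assms(1) Some by (simp add: anc_or_eps_def)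
    then have "a \<in> anc w" "w \<noteq> a" "vars t a \<subseteq> Z q \<Longrightarrow> vars t u \<subseteq> Z q"
      using assms(2) vars_antimono[of a u t] by (auto simp: anc_def strict_prefix_def)
    then show "Ind t Z q w (insert u R \<union> set_option v) \<longleftrightarrow> Ind t Z q w (insert u R)"
      using assms(2) Some unfolding Ind_def by auto
  qed
qed simp

locale benefit_instance =
  fixes Q :: "'q set" and pr :: "'q \<Rightarrow> real" and Z :: "'q \<Rightarrow> 'x set"
    and c :: "pos \<Rightarrow> real" and k :: nat and t :: "'x btree"
  assumes pr_nonneg: "\<forall>q\<in>Q. pr q \<ge> 0" and c_nonneg: "\<forall>x\<in>positions t. c x \<ge> 0"
begin

text \<open>For \<open>R \<subseteq> T(u)\<close> this is the partial benefit \<open>B\<^sub>u(R \<union> {v})\<close>, with \<open>None\<close> playing \<open>\<epsilon>\<close>.\<close>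

definition partial_benefit :: "pos option \<Rightarrow> pos set \<Rightarrow> real" where
  "partial_benefit v R = (\<Sum>w\<in>R. EI Q pr t Z w (R \<union> set_option v) * Ctot t c w)"

definition covered_cost :: "'q \<Rightarrow> pos option \<Rightarrow> pos set \<Rightarrow> real" where
  "covered_cost q v R = (\<Sum>w\<in>R. if Ind t Z q w (R \<union> set_option v) then Ctot t c w else 0)"

lemma partial_benefit_empty [simp]: "partial_benefit v {} = 0"
  by (simp add: partial_benefit_def)

lemma Ctot_nonneg: "Ctot t c w \<ge> 0"
  unfolding Ctot_def using c_nonneg by (intro sum_nonneg) (auto simp: Tset_def)

lemma covered_cost_nonneg: "covered_cost q v R \<ge> 0"
  unfolding covered_cost_def using Ctot_nonneg by (intro sum_nonneg) auto

lemma partial_benefit_eq_sum_covered_cost: "partial_benefit v R = (\<Sum>q\<in>Q. pr q * covered_cost q v R)"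
proof -
  have "partial_benefit v R
      = (\<Sum>w\<in>R. \<Sum>q\<in>Q. pr q * (if Ind t Z q w (R \<union> set_option v) then Ctot t c w else 0))"
    unfolding partial_benefit_def EI_def sum_distrib_right by (intro sum.cong refl) auto
  also have "\<dots> = (\<Sum>q\<in>Q. pr q * covered_cost q v R)"
    unfolding covered_cost_def sum_distrib_left by (rule sum.swap)
  finally show ?thesis .
qed

lemma partial_benefit_union_children:
  assumes S1: "S1 \<subseteq> Tset t (u @ [False])" and S2: "S2 \<subseteq> Tset t (u @ [True])"
  shows "partial_benefit v (S1 \<union> S2) = partial_benefit v S1 + partial_benefit v S2"
proof -
  let ?V = "set_option v"
  have "EI Q pr t Z w (S1 \<union> S2 \<union> ?V) = EI Q pr t Z w (S1 \<union> ?V)" if "w \<in> S1" for w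
    using EI_Un_sibling[of w t u False S2 Q pr Z "S1 \<union> ?V"] that S1 S2 by (auto simp: Un_ac)
  moreover have "EI Q pr t Z w (S1 \<union> S2 \<union> ?V) = EI Q pr t Z w (S2 \<union> ?V)" if "w \<in> S2" for w
    using EI_Un_sibling[of w t u True S1 Q pr Z "S2 \<union> ?V"] that S1 S2 by (auto simp: Un_ac)
  moreover have "finite S1" "finite S2" "S1 \<inter> S2 = {}"
    using S1 S2 Tset_children_disjoint[of t u] by (auto intro: finite_subset_Tset)
  ultimately show ?thesis
    unfolding partial_benefit_def by (simp add: sum.union_disjoint)
qed

lemma partial_benefit_insert_children:
  assumes S1: "S1 \<subseteq> Tset t (u @ [False])" and S2: "S2 \<subseteq> Tset t (u @ [True])"
    and v: "anc_or_eps v u"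
  shows "partial_benefit v (insert u (S1 \<union> S2))
    = Bu Q pr t Z c u v + partial_benefit (Some u) S1 + partial_benefit (Some u) S2"
proof -
  let ?V = "set_option v" and ?R = "insert u (S1 \<union> S2)"
  have u: "u \<notin> S1 \<union> S2" using S1 S2 notin_Tset_child by blast
  have "EI Q pr t Z u (?R \<union> ?V) = EI Q pr t Z u (insert u ?V \<union> (S1 \<union> S2))"
    by (simp add: Un_ac)
  also have "\<dots> = EI Q pr t Z u (insert u ?V)"
    using S1 S2 u anc_disjoint_Tset_child[of u t] by (intro EI_Un_non_ancestors) blast+
  finally have "EI Q pr t Z u (?R \<union> ?V) * Ctot t c u = Bu Q pr t Z c u v"
    by (cases v) (simp_all add: Bu_def insert_commute)
  moreover have child: "EI Q pr t Z w (insert u S \<union> ?V \<union> S') = EI Q pr t Z w (S \<union> {u})"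
    if "w \<in> S" "S \<subseteq> Tset t (u @ [b])" "S' \<subseteq> Tset t (u @ [\<not> b])" for w S S' b
  proof -
    have w: "w \<in> Tset t (u @ [b])" using that by blast
    have "EI Q pr t Z w (insert u S \<union> ?V \<union> S') = EI Q pr t Z w (insert u S \<union> ?V)"
      using EI_Un_sibling[OF w that(3)] .
    also have "\<dots> = EI Q pr t Z w (insert u S)"
      using EI_context_shadowed[OF v anc_if_Tset_child[OF w]] .
    finally show ?thesis by simp
  qed
  have "EI Q pr t Z w (?R \<union> ?V) = EI Q pr t Z w (S1 \<union> {u})" if "w \<in> S1" for w
    using child[of w S1 False S2] that S1 S2 by (simp add: Un_ac)
  moreover have "EI Q pr t Z w (?R \<union> ?V) = EI Q pr t Z w (S2 \<union> {u})" if "w \<in> S2" for w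
    using child[of w S2 True S1] that S1 S2 by (simp add: Un_ac)
  moreover have "finite S1" "finite S2" "S1 \<inter> S2 = {}"
    using S1 S2 Tset_children_disjoint[of t u] by (auto intro: finite_subset_Tset)
  ultimately show ?thesis
    unfolding partial_benefit_def using u by (simp add: sum.union_disjoint)
qed

lemma covered_cost_le_Ctot:
  assumes R: "R \<subseteq> Tset t u"
  shows "covered_cost q v R \<le> Ctot t c u"
proof -
  let ?S = "R \<union> set_option v"
  define A where "A = {w \<in> R. Ind t Z q w ?S}"
  have finA: "finite A" using finite_subset_Tset[OF R] by (simp add: A_def)
  have "covered_cost q v R = (\<Sum>w\<in>A. Ctot t c w)"
    unfolding covered_cost_def A_def using finite_subset_Tset[OF R] by (simp add: sum.inter_filter)
  also have "\<dots> = (\<Sum>x\<in>(\<Union>w\<in>A. Tset t w). c x)"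
    unfolding Ctot_def
  proof (rule sum.UNION_disjoint[symmetric])
    show "\<forall>w1\<in>A. \<forall>w2\<in>A. w1 \<noteq> w2 \<longrightarrow> Tset t w1 \<inter> Tset t w2 = {}"
    proof (intro ballI impI)
      fix w1 w2 assume w: "w1 \<in> A" "w2 \<in> A" "w1 \<noteq> w2"
      have "\<not> prefix a b" if "a \<in> A" "b \<in> A" "a \<noteq> b" for a b
        using that by (auto simp: A_def Ind_def anc_def strict_prefix_def)
      then show "Tset t w1 \<inter> Tset t w2 = {}"
        using w by (auto simp: Tset_def dest: prefix_same_cases)
    qed
  qed (use finA finite_Tset in auto)
  also have "\<dots> \<le> (\<Sum>x\<in>Tset t u. c x)"
  proof (rule sum_mono2[OF finite_Tset])
    show "(\<Union>w\<in>A. Tset t w) \<subseteq> Tset t u"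
      using R unfolding A_def Tset_def by (auto intro: prefix_order.order_trans)
  qed (use c_nonneg in \<open>auto simp: Tset_def\<close>)
  finally show ?thesis by (simp add: Ctot_def)
qed

text \<open>For a query that \<open>u\<close> comes to answer, \<open>u\<close> collects \<open>C(u)\<close>, which bounds what \<open>R\<close>
  collected before; no other query is affected.\<close>

lemma covered_cost_le_insert_root:
  assumes R: "R \<subseteq> Tset t u" and u: "u \<notin> R" and v: "anc_or_eps v u"
  shows "covered_cost q v R \<le> covered_cost q v (insert u R)"
proof -
  let ?S = "R \<union> set_option v" and ?S' = "insert u R \<union> set_option v"
  have insert_eq: "covered_cost q v (insert u R) = (if Ind t Z q u ?S' then Ctot t c u else 0)
      + (\<Sum>w\<in>R. if Ind t Z q w ?S' then Ctot t c w else 0)"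
    unfolding covered_cost_def using finite_subset_Tset[OF R] u by simp
  have u_anc: "u \<in> anc w" if "w \<in> R" for w
    using that R u by (auto simp: Tset_def anc_def strict_prefix_def)
  show ?thesis
  proof (cases "vars t u \<subseteq> Z q")
    case False
    then have "\<not> Ind t Z q u ?S'" unfolding Ind_def by auto
    moreover have "Ind t Z q w ?S' \<longleftrightarrow> Ind t Z q w ?S" if "w \<in> R" for w
      using that u False unfolding Ind_def by auto
    ultimately have "covered_cost q v (insert u R) = covered_cost q v R"
      unfolding insert_eq by (simp add: covered_cost_def cong: sum.cong)
    then show ?thesis by simp
  next
    case u_qualifies: True
    show ?thesis
    proof (cases "\<exists>a. v = Some a \<and> vars t a \<subseteq> Z q")
      case True
      then obtain a where a: "v = Some a" "vars t a \<subseteq> Z q" by blast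
      then have "a \<in> anc w" if "w \<in> R" for w
        using u_anc[OF that] v by (auto simp: anc_or_eps_def anc_def intro: prefix_order.less_trans)
      then have "covered_cost q v R = 0" using a unfolding covered_cost_def Ind_def by auto
      then show ?thesis using covered_cost_nonneg by simp
    next
      case False
      have "anc u \<inter> R = {}"
        using R by (auto simp: Tset_def anc_def strict_prefix_def dest: prefix_order.antisym)
      then have "Ind t Z q u ?S'"
        unfolding Ind_def using u_qualifies False by (cases v) (auto simp: anc_def)
      then have "Ctot t c u \<le> covered_cost q v (insert u R)"
        unfolding insert_eq using Ctot_nonneg by (auto intro!: sum_nonneg)
      then show ?thesis using covered_cost_le_Ctot[OF R, of q v] by simp
    qed
  qed
qed

lemma partial_benefit_le_insert_root:
  "R \<subseteq> Tset t u \<Longrightarrow> u \<notin> R \<Longrightarrow> anc_or_eps v u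
   \<Longrightarrow> partial_benefit v R \<le> partial_benefit v (insert u R)"
  unfolding partial_benefit_eq_sum_covered_cost using covered_cost_le_insert_root pr_nonneg
  by (intro sum_mono mult_left_mono) auto

section \<open>Correctness of the table\<close>

lemma construct_sound:
  "construct Q pr Z c k t s u \<kappa> v S \<Longrightarrow> subtree t u = s \<Longrightarrow> anc_or_eps v u \<Longrightarrow>
   S \<subseteq> inner t \<inter> Tset t u \<and> card S \<le> \<kappa> \<and> Dtab Q pr Z c k t s u \<kappa> v = ereal (partial_benefit v S)"
proof (induction rule: construct.induct)
  case (leaf u \<kappa> v)
  then show ?case by simp
next
  case (plus_one x l r u v)
  have "partial_benefit v {u} = Bu Q pr t Z c u v"
    using partial_benefit_insert_children[of "{}" u "{}" v] plus_one.prems(2) by simp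
  then show ?case using plus_one root_in_inner_Tset[OF plus_one.prems(1)] Dplus_1 by simp
next
  case (plus x l r u \<kappa> v a b S1 S2)
  note children = subtree_append_children[OF plus.prems(1)]
  have S1: "S1 \<subseteq> inner t \<inter> Tset t (u @ [False])" "card S1 \<le> a"
    "Dtab Q pr Z c k t l (u @ [False]) a (Some u) = ereal (partial_benefit (Some u) S1)"
    using plus.IH(1) children anc_or_eps_parent by auto
  have S2: "S2 \<subseteq> inner t \<inter> Tset t (u @ [True])" "card S2 \<le> b"
    "Dtab Q pr Z c k t r (u @ [True]) b (Some u) = ereal (partial_benefit (Some u) S2)"
    using plus.IH(2) children anc_or_eps_parent by auto
  have "insert u (S1 \<union> S2) \<subseteq> inner t \<inter> Tset t u"
    using S1(1) S2(1) root_in_inner_Tset[OF plus.prems(1)] Tset_child_subset by blast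
  moreover have "card (insert u (S1 \<union> S2)) \<le> \<kappa>"
    using card_insert_children[of S1 t u S2] S1 S2 plus.hyps(2,3) by (auto simp: splits_def)
  moreover have
    "Dtab Q pr Z c k t (Node x l r) u \<kappa> v = ereal (partial_benefit v (insert u (S1 \<union> S2)))"
    using plus.hyps(1,2) splitmax_eq_if_maximal[OF plus.hyps(3,4)] S1 S2
      partial_benefit_insert_children[of S1 u S2 v] plus.prems(2) by simp
  ultimately show ?case by blast
next
  case (minus x l r u \<kappa> v a b S1 S2)
  note children = subtree_append_children[OF minus.prems(1)]
  have S1: "S1 \<subseteq> inner t \<inter> Tset t (u @ [False])" "card S1 \<le> a"
    "Dtab Q pr Z c k t l (u @ [False]) a v = ereal (partial_benefit v S1)"
    using minus.IH(1) children anc_or_eps_child minus.prems(2) by auto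
  have S2: "S2 \<subseteq> inner t \<inter> Tset t (u @ [True])" "card S2 \<le> b"
    "Dtab Q pr Z c k t r (u @ [True]) b v = ereal (partial_benefit v S2)"
    using minus.IH(2) children anc_or_eps_child minus.prems(2) by auto
  have "S1 \<union> S2 \<subseteq> inner t \<inter> Tset t u"
    using S1(1) S2(1) Tset_child_subset by blast
  moreover have "card (S1 \<union> S2) \<le> \<kappa>"
    using card_union_children[of S1 t u S2] S1 S2 minus.hyps(2) by (auto simp: splits_def)
  moreover have "Dtab Q pr Z c k t (Node x l r) u \<kappa> v = ereal (partial_benefit v (S1 \<union> S2))"
    using minus.hyps(1) splitmax_eq_if_maximal[OF minus.hyps(2,3)] S1 S2
      partial_benefit_union_children[of S1 u S2 v]
    unfolding Dtab_Node_eq_max by (auto simp: max_def)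
  ultimately show ?case by blast
qed

definition Dtab_dominates :: "'x btree \<Rightarrow> pos \<Rightarrow> bool" where
  "Dtab_dominates s u \<longleftrightarrow> (\<forall>R \<kappa> v. R \<subseteq> inner t \<inter> Tset t u \<longrightarrow> card R \<le> \<kappa> \<longrightarrow>
     \<kappa> \<le> min k (nnodes s) \<longrightarrow> anc_or_eps v u \<longrightarrow>
     ereal (partial_benefit v R) \<le> Dtab Q pr Z c k t s u \<kappa> v)"

lemma Dtab_dominatesD:
  "Dtab_dominates s u \<Longrightarrow> R \<subseteq> inner t \<inter> Tset t u \<Longrightarrow> card R \<le> \<kappa> \<Longrightarrow> \<kappa> \<le> min k (nnodes s)
   \<Longrightarrow> anc_or_eps v u \<Longrightarrow> ereal (partial_benefit v R) \<le> Dtab Q pr Z c k t s u \<kappa> v"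
  by (simp add: Dtab_dominates_def)

lemma Dtab_ge_with_root:
  assumes u: "subtree t u = Node x l r"
    and IH: "Dtab_dominates l (u @ [False])" "Dtab_dominates r (u @ [True])"
    and R: "R \<subseteq> inner t \<inter> Tset t u" "u \<in> R" "card R \<le> \<kappa>"
    and \<kappa>: "\<kappa> \<le> min k (nnodes (Node x l r))" and v: "anc_or_eps v u"
  shows "ereal (partial_benefit v R) \<le> Dtab Q pr Z c k t (Node x l r) u \<kappa> v"
proof -
  let ?L = "Tset t (u @ [False])" and ?T = "Tset t (u @ [True])"
  let ?kl = "min k (nnodes l)" and ?kr = "min k (nnodes r)"
  let ?Dl = "Dtab Q pr Z c k t l (u @ [False])" and ?Dr = "Dtab Q pr Z c k t r (u @ [True])"
  have R_eq: "R = insert u (R \<inter> ?L \<union> R \<inter> ?T)" using R Tset_subset_children by blast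
  then have card: "Suc (card (R \<inter> ?L) + card (R \<inter> ?T)) \<le> \<kappa>"
    using R(3) card_insert_children[of "R \<inter> ?L" t u "R \<inter> ?T"] by simp
  moreover have "\<kappa> - 1 \<le> ?kl + ?kr" using \<kappa> by (auto simp: min_def split: if_splits)
  ultimately have split:
    "ereal (partial_benefit (Some u) (R \<inter> ?L)) + ereal (partial_benefit (Some u) (R \<inter> ?T))
      \<le> splitmax (\<kappa> - 1) ?kl ?kr (\<lambda>a. ?Dl a (Some u)) (\<lambda>b. ?Dr b (Some u))"
    using card_children_le[OF u R(1), of k] R \<kappa> anc_or_eps_parent
    by (intro splitmax_lower Dtab_dominatesD[OF IH(1)] Dtab_dominatesD[OF IH(2)]) auto
  have "ereal (partial_benefit v R)
      = ereal (Bu Q pr t Z c u v)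
        + (ereal (partial_benefit (Some u) (R \<inter> ?L)) + ereal (partial_benefit (Some u) (R \<inter> ?T)))"
    using partial_benefit_insert_children[of "R \<inter> ?L" u "R \<inter> ?T" v] v R_eq by auto
  also have "\<dots> \<le> ereal (Bu Q pr t Z c u v)
      + splitmax (\<kappa> - 1) ?kl ?kr (\<lambda>a. ?Dl a (Some u)) (\<lambda>b. ?Dr b (Some u))"
    by (rule add_left_mono[OF split])
  also have "\<dots> = Dplus Q pr Z c k t (Node x l r) u \<kappa> v"
    using card by simp
  also have "\<dots> \<le> Dtab Q pr Z c k t (Node x l r) u \<kappa> v"
    unfolding Dtab_Node_eq_max by simp
  finally show ?thesis .
qed

lemma Dtab_ge_without_root:
  assumes u: "subtree t u = Node x l r"
    and IH: "Dtab_dominates l (u @ [False])" "Dtab_dominates r (u @ [True])"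
    and R: "R \<subseteq> inner t \<inter> Tset t u" "u \<notin> R" "card R \<le> \<kappa>"
    and \<kappa>: "\<kappa> \<le> k" "\<kappa> \<le> min k (nnodes l) + min k (nnodes r)" and v: "anc_or_eps v u"
  shows "ereal (partial_benefit v R) \<le> Dtab Q pr Z c k t (Node x l r) u \<kappa> v"
proof -
  let ?L = "Tset t (u @ [False])" and ?T = "Tset t (u @ [True])"
  have R_eq: "R = R \<inter> ?L \<union> R \<inter> ?T" using R Tset_subset_children by blast
  then have card: "card R = card (R \<inter> ?L) + card (R \<inter> ?T)"
    using card_union_children[of "R \<inter> ?L" t u "R \<inter> ?T"] by simp
  have "ereal (partial_benefit v R)
      = ereal (partial_benefit v (R \<inter> ?L)) + ereal (partial_benefit v (R \<inter> ?T))"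
    using partial_benefit_union_children[of "R \<inter> ?L" u "R \<inter> ?T" v] R_eq by simp
  also have "\<dots> \<le> splitmax \<kappa> (min k (nnodes l)) (min k (nnodes r))
      (\<lambda>a. Dtab Q pr Z c k t l (u @ [False]) a v) (\<lambda>b. Dtab Q pr Z c k t r (u @ [True]) b v)"
    using card card_children_le[OF u R(1), of k] R \<kappa> v anc_or_eps_child
    by (intro splitmax_lower Dtab_dominatesD[OF IH(1)] Dtab_dominatesD[OF IH(2)]) auto
  also have "\<dots> \<le> Dtab Q pr Z c k t (Node x l r) u \<kappa> v"
    unfolding Dtab_Node_eq_max by simp
  finally show ?thesis .
qed

lemma Dtab_dominates_Node:
  assumes u: "subtree t u = Node x l r"
    and IH: "Dtab_dominates l (u @ [False])" "Dtab_dominates r (u @ [True])"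
  shows "Dtab_dominates (Node x l r) u"
  unfolding Dtab_dominates_def
proof (intro allI impI)
  fix R \<kappa> v
  assume R: "R \<subseteq> inner t \<inter> Tset t u" "card R \<le> \<kappa>"
    and \<kappa>: "\<kappa> \<le> min k (nnodes (Node x l r))" and v: "anc_or_eps v u"
  consider "u \<in> R" | "u \<notin> R" "\<kappa> \<le> min k (nnodes l) + min k (nnodes r)"
    | "u \<notin> R" "min k (nnodes l) + min k (nnodes r) < \<kappa>"
    by linarith
  then show "ereal (partial_benefit v R) \<le> Dtab Q pr Z c k t (Node x l r) u \<kappa> v"
  proof cases
    case 1
    then show ?thesis using Dtab_ge_with_root[OF u IH] R \<kappa> v by blast
  next
    case 2
    then show ?thesis using Dtab_ge_without_root[OF u IH] R \<kappa> v by simp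
  next
    case 3
    text \<open>No split of \<open>\<kappa>\<close> fits into the children, but then \<open>R\<close> leaves room for \<open>u\<close>.\<close>
    have "R = R \<inter> Tset t (u @ [False]) \<union> R \<inter> Tset t (u @ [True])"
      using 3 R(1) Tset_subset_children by blast
    then have "card R = card (R \<inter> Tset t (u @ [False])) + card (R \<inter> Tset t (u @ [True]))"
      using card_union_children[of "R \<inter> Tset t (u @ [False])" t u "R \<inter> Tset t (u @ [True])"]
      by simp
    moreover have "card R \<le> k" using R(2) \<kappa> by simp
    moreover note card_children_le[OF u R(1) this]
    ultimately have "card R < \<kappa>" using 3 by linarith
    then have "card (insert u R) \<le> \<kappa>"
      using finite_subset_Tset[of R t u] R(1) by (simp add: card_insert_if)
    moreover have "insert u R \<subseteq> inner t \<inter> Tset t u"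
      using R(1) root_in_inner_Tset[OF u] by blast
    ultimately have "ereal (partial_benefit v (insert u R)) \<le> Dtab Q pr Z c k t (Node x l r) u \<kappa> v"
      using Dtab_ge_with_root[OF u IH] \<kappa> v by blast
    moreover have "partial_benefit v R \<le> partial_benefit v (insert u R)"
      using partial_benefit_le_insert_root 3 R(1) v by blast
    ultimately show ?thesis by (meson ereal_less_eq(3) order_trans)
  qed
qed

lemma Dtab_dominates: "subtree t u = s \<Longrightarrow> Dtab_dominates s u"
proof (induction s arbitrary: u)
  case Leaf
  have "inner t \<inter> Tset t u = {}"
    using card_inner_Tset_less[OF Leaf] finite_Tset[of t u] by auto
  then show ?case by (auto simp: Dtab_dominates_def)
next
  case (Node x l r)
  then show ?case
    using Dtab_dominates_Node subtree_append_children[OF Node.prems] by blast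
qed

end

theorem theorem1:
  fixes t :: "'x btree" and Q :: "'q set" and pr :: "'q \<Rightarrow> real"
    and Z :: "'q \<Rightarrow> 'x set" and c :: "pos \<Rightarrow> real" and k :: nat
  assumes "finite Q"
    and "\<forall>q\<in>Q. pr q \<ge> 0" and "(\<Sum>q\<in>Q. pr q) = 1"
    and "\<forall>x\<in>positions t. c x \<ge> 0"
    and "k > 0" and "k \<le> nnodes t"
  shows "(\<exists>S. construct Q pr Z c k t t [] k None S)
    \<and> (\<forall>S. construct Q pr Z c k t t [] k None S \<longrightarrow>
          S \<subseteq> inner t \<and> card S \<le> k
        \<and> (\<forall>R. R \<subseteq> inner t \<and> card R \<le> k \<longrightarrow> Ben Q pr t Z c R \<le> Ben Q pr t Z c S)
        \<and> Dtab Q pr Z c k t t [] k None = ereal (Ben Q pr t Z c S))"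
proof -
  interpret benefit_instance Q pr Z c k t
    using assms by unfold_locales auto
  have Ben_eq: "Ben Q pr t Z c R = partial_benefit None R" for R
    by (simp add: Ben_def partial_benefit_def)
  have inner_eq: "inner t \<inter> Tset t [] = inner t"
    by (auto simp: inner_def Tset_def)
  have k: "k \<le> min k (nnodes t)"
    using assms(6) by simp
  have sound:
    "S \<subseteq> inner t \<and> card S \<le> k \<and> Dtab Q pr Z c k t t [] k None = ereal (Ben Q pr t Z c S)"
    if "construct Q pr Z c k t t [] k None S" for S
    using construct_sound[OF that _ anc_or_eps_None] inner_eq Ben_eq by simp
  have optimal: "ereal (Ben Q pr t Z c R) \<le> Dtab Q pr Z c k t t [] k None"
    if "R \<subseteq> inner t" "card R \<le> k" for R
    using Dtab_dominatesD[OF Dtab_dominates[of "[]" t] _ that(2) k anc_or_eps_None] that(1)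
      inner_eq Ben_eq by simp
  show ?thesis
    using construct_exists[OF k] sound optimal by fastforce
qed

end
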